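(* Fix two distinct decimal digits $d_1 \neq d_2$ in $\{0,1,\dots,9\}$. For integers $i \ge 1$ and $k_1, k_2 \ge 0$, let $S(i,k_1,k_2)$ be the set of positive integers whose base-10 representation has exactly $i$ digits (no leading zeros) and contains exactly $k_1$ occurrences of the digit $d_1$ and exactly $k_2$ occurrences of the digit $d_2$; set $S(i,k_1,k_2)=\emptyset$ if $k_1<0$ or $k_2<0$. For integers $j \ge 1$ define $$t(i,j,k_1,k_2) = \sum_{x \in S(i,k_1,k_2)} \frac{1}{x^j}$$ (an empty sum being $0$). Then for all integers $i\ge 1$, $j \ge 1$, $k_1,k_2 \ge 0$: $$t(i+1,j,k_1,k_2) = \sum_{n=0}^{\infty} (-1)^n \binom{j+n-1}{n} \frac{1}{10^{j+n}} \Big[ d_1^{\,n}\, t(i,j+n,k_1-1,k_2) + d_2^{\,n}\, t(i,j+n,k_1,k_2-1) + \Big(\sum_{\substack{d\in\{0,\dots,9\}\\ d\ne d_1,\, d\ne d_2}} d^{\,n}\Big) t(i,j+n,k_1,k_2) \Big],$$ where $0^0$ is interpreted as $1$, and the series on the right converges.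
   Context: All integers are written in base 10. The three terms in the bracket correspond to the decomposition $S(i+1,k_1,k_2) = \{10x+d_1 : x\in S(i,k_1-1,k_2)\} \cup \{10x+d_2 : x \in S(i,k_1,k_2-1)\} \cup \{10x+d : x\in S(i,k_1,k_2),\ d\in\{0,\dots,9\}\setminus\{d_1,d_2\}\}$. *)

theory Defs
  imports Complex_Main
begin

fun digits10 :: "nat \<Rightarrow> nat list" where
  "digits10 x = (if x < 10 then [x] else (x mod 10) # digits10 (x div 10))"

text \<open>Counts are integers, so
  the set is empty whenever k1 < 0 or k2 < 0.\<close>
definition S :: "nat \<Rightarrow> nat \<Rightarrow> nat \<Rightarrow> int \<Rightarrow> int \<Rightarrow> nat set" where
  "S d1 d2 i k1 k2 = {x. 0 < x \<and> length (digits10 x) = i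
      \<and> int (count_list (digits10 x) d1) = k1 \<and> int (count_list (digits10 x) d2) = k2}"

definition t :: "nat \<Rightarrow> nat \<Rightarrow> nat \<Rightarrow> nat \<Rightarrow> int \<Rightarrow> int \<Rightarrow> real" where
  "t d1 d2 i j k1 k2 = (\<Sum>x\<in>S d1 d2 i k1 k2. 1 / (real x) ^ j)"

end

theory Submission
  imports Defs "HOL-Analysis.Analysis"
begin

text \<open>An (i+1)-digit number is 10x + d with x an i-digit number and d its last digit, and
  1/(10x + d)^j expands by the negative binomial series in d/(10x), which converges because
  d < 10 \<le> 10x. Summing these finitely many series over x \<in> S(i, ...) and grouping the
  last digits as d1, d2 or neither gives the identity.\<close>

lemma gbinomial_minus_of_nat:
  "(- real j gchoose n) = (-1) ^ n * real ((j + n - 1) choose n)"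
proof (cases "j + n = 0")
  case True then show ?thesis by simp
next
  case False
  then have "real (j + n - 1) = real j + real n - 1" by linarith
  then show ?thesis by (simp add: gbinomial_minus binomial_gbinomial)
qed

lemma negative_binomial_series:
  fixes a b :: real
  assumes "\<bar>b\<bar> < a"
  shows "(\<lambda>n. (-1) ^ n * real ((j + n - 1) choose n) * b ^ n / a ^ (j + n)) sums (1 / (a + b) ^ j)"
proof -
  have "a > 0" "a + b > 0" using assms by auto
  have "(\<lambda>n. (- real j gchoose n) * a powr (- real j - real n) * b ^ n) sums (a + b) powr (- real j)"
    using gen_binomial_real''[OF assms] .
  moreover have "a powr (- real j - real n) = 1 / a ^ (j + n)" for n
    using \<open>a > 0\<close> by (simp add: powr_diff powr_minus powr_realpow power_add divide_inverse)
  moreover have "(a + b) powr (- real j) = 1 / (a + b) ^ j"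
    using \<open>a + b > 0\<close> by (simp add: powr_minus powr_realpow divide_inverse)
  ultimately show ?thesis by (simp add: gbinomial_minus_of_nat mult_ac)
qed

declare digits10.simps [simp del]

lemma digits10_less_ten: "x < 10 \<Longrightarrow> digits10 x = [x]"
  by (simp add: digits10.simps)

lemma digits10_ge_ten: "10 \<le> x \<Longrightarrow> digits10 x = x mod 10 # digits10 (x div 10)"
  by (simp add: digits10.simps)

lemma digits10_append_digit: "0 < x \<Longrightarrow> d < 10 \<Longrightarrow> digits10 (10 * x + d) = d # digits10 x"
  by (simp add: digits10_ge_ten)

lemma less_ten_power_length_digits10: "x < 10 ^ length (digits10 x)"
proof (induction x rule: digits10.induct)
  case (1 x)
  show ?case
  proof (cases "x < 10")
    case True
    then show ?thesis by (simp add: digits10_less_ten)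
  next
    case False
    with 1 have "x div 10 < 10 ^ length (digits10 (x div 10))" by simp
    with False show ?thesis by (simp add: digits10_ge_ten)
  qed
qed

lemma finite_S: "finite (S d1 d2 i k1 k2)"
proof (rule finite_subset)
  show "S d1 d2 i k1 k2 \<subseteq> {..<10 ^ i}"
    using less_ten_power_length_digits10 by (auto simp: S_def)
qed simp

lemma S_Suc:
  assumes "1 \<le> i"
  shows "S d1 d2 (Suc i) k1 k2 = (\<lambda>(d, x). 10 * x + d) `
           (SIGMA d:{0..9}. S d1 d2 i (k1 - of_bool (d = d1)) (k2 - of_bool (d = d2)))"
    (is "_ = ?f ` ?D")
proof
  show "S d1 d2 (Suc i) k1 k2 \<subseteq> ?f ` ?D"
  proof
    fix y assume y: "y \<in> S d1 d2 (Suc i) k1 k2"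
    have "10 \<le> y"
    proof (rule ccontr)
      assume "\<not> 10 \<le> y"
      then have "length (digits10 y) = 1" by (simp add: digits10_less_ten)
      with y assms show False by (simp add: S_def)
    qed
    then have "digits10 y = y mod 10 # digits10 (y div 10)" and "0 < y div 10"
      by (simp_all add: digits10_ge_ten)
    with y have "(y mod 10, y div 10) \<in> ?D" by (auto simp: S_def)
    then show "y \<in> ?f ` ?D" by (rule rev_image_eqI) simp
  qed
next
  show "?f ` ?D \<subseteq> S d1 d2 (Suc i) k1 k2"
    by (auto simp: S_def digits10_append_digit)
qed

lemma inj_on_append_digit: "inj_on (\<lambda>(d, x). 10 * x + d) (SIGMA d:{0..(9::nat)}. B d)"
  by (rule inj_onI) (clarsimp, presburger)

lemma t_Suc:
  assumes "1 \<le> i"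
  shows "t d1 d2 (Suc i) j k1 k2 =
    (\<Sum>d=0..9. \<Sum>x\<in>S d1 d2 i (k1 - of_bool (d = d1)) (k2 - of_bool (d = d2)). 1 / real (10 * x + d) ^ j)"
proof -
  have "t d1 d2 (Suc i) j k1 k2 = (\<Sum>(d, x)\<in>(SIGMA d:{0..9}.
          S d1 d2 i (k1 - of_bool (d = d1)) (k2 - of_bool (d = d2))). 1 / real (10 * x + d) ^ j)"
    unfolding t_def S_Suc[OF assms] by (subst sum.reindex[OF inj_on_append_digit]) (simp add: case_prod_unfold)
  also have "\<dots> = (\<Sum>d=0..9. \<Sum>x\<in>S d1 d2 i (k1 - of_bool (d = d1)) (k2 - of_bool (d = d2)).
          1 / real (10 * x + d) ^ j)"
    by (rule sum.Sigma[symmetric]) (simp_all add: finite_S)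
  finally show ?thesis .
qed

lemma t_Suc_sums:
  assumes "1 \<le> i"
  shows "(\<lambda>n. (-1) ^ n * real ((j + n - 1) choose n) / 10 ^ (j + n) *
           (\<Sum>d=0..9. real d ^ n * t d1 d2 i (j + n) (k1 - of_bool (d = d1)) (k2 - of_bool (d = d2))))
         sums t d1 d2 (Suc i) j k1 k2"
proof -
  define c where "c n = (-1) ^ n * real ((j + n - 1) choose n) / 10 ^ (j + n)" for n
  define B where "B d = S d1 d2 i (k1 - of_bool (d = d1)) (k2 - of_bool (d = d2))" for d
  have "(\<lambda>n. \<Sum>d=0..9. \<Sum>x\<in>B d. c n * (real d ^ n / real x ^ (j + n)))
          sums (\<Sum>d=0..9. \<Sum>x\<in>B d. 1 / real (10 * x + d) ^ j)"
  proof (intro sums_sum)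
    fix d x assume "d \<in> {0..9::nat}" "x \<in> B d"
    then have "\<bar>real d\<bar> < 10 * real x" by (auto simp: B_def S_def)
    from negative_binomial_series[OF this, of j]
    show "(\<lambda>n. c n * (real d ^ n / real x ^ (j + n))) sums (1 / real (10 * x + d) ^ j)"
      by (simp add: c_def power_mult_distrib add.commute)
  qed
  then show ?thesis
    unfolding t_Suc[OF assms] by (simp add: B_def c_def t_def sum_distrib_left)
qed

lemma sum_remove_two:
  assumes "finite A" "a \<in> A" "b \<in> A" "a \<noteq> b"
  shows "sum g A = g a + g b + sum g (A - {a, b})"
proof -
  have "sum g A = g a + sum g (A - {a})"
    using assms by (intro sum.remove)
  also have "sum g (A - {a}) = g b + sum g (A - {a} - {b})"
    using assms by (intro sum.remove) auto
  also have "A - {a} - {b} = A - {a, b}"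
    by auto
  finally show ?thesis
    by (simp only: add.assoc)
qed

theorem mainTheorem1:
  fixes d1 d2 i j :: nat and k1 k2 :: int
  assumes "d1 \<le> 9" "d2 \<le> 9" "d1 \<noteq> d2"
    and "i \<ge> 1" "j \<ge> 1" "k1 \<ge> 0" "k2 \<ge> 0"
  shows "(\<lambda>n. (-1) ^ n * real ((j + n - 1) choose n) / 10 ^ (j + n) *
            (real d1 ^ n * t d1 d2 i (j + n) (k1 - 1) k2
             + real d2 ^ n * t d1 d2 i (j + n) k1 (k2 - 1)
             + (\<Sum>d\<in>{0..9::nat} - {d1, d2}. real d ^ n) * t d1 d2 i (j + n) k1 k2))
         sums t d1 d2 (i + 1) j k1 k2"
proof -
  have "(\<Sum>d=0..9. real d ^ n * t d1 d2 i (j + n) (k1 - of_bool (d = d1)) (k2 - of_bool (d = d2)))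
      = real d1 ^ n * t d1 d2 i (j + n) (k1 - 1) k2
        + real d2 ^ n * t d1 d2 i (j + n) k1 (k2 - 1)
        + (\<Sum>d\<in>{0..9::nat} - {d1, d2}. real d ^ n) * t d1 d2 i (j + n) k1 k2" for n
    using assms(1-3) by (simp add: sum_remove_two[of "{0..9}" d1 d2] sum_distrib_right)
  with t_Suc_sums[OF \<open>i \<ge> 1\<close>, of j d1 d2 k1 k2] show ?thesis by simp
qed

end
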